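(* Let $X$ be a real Banach space and $h:X\times X^*\to\mathbb{R}\cup\{\pm\infty\}$ a proper lower semicontinuous convex function. Then $D(\mathcal{J}\delta_{D(h)})\subseteq 0^+D(\mathcal{J}h)$.
   Context: $X$ is identified with its canonical image in $X^{**}$. $D(f)=\{z\;|\;f(z)<\infty\}$; $\delta_C$ is the indicator function of $C$ (0 on $C$, $+\infty$ elsewhere). For $g:X\times X^*\to\mathbb{R}\cup\{\pm\infty\}$, the conjugate is $g^*:X^*\times X^{**}\to\mathbb{R}\cup\{\pm\infty\}$, $g^*(x^*,x^{**})=\sup_{(y,y^* )\in X\times X^*}\langle y,x^*\rangle+\langle x^{**},y^*\rangle-g(y,y^* )$, and $(\mathcal{J}g)(x,x^* )=g^*(x^*,x)$. The recession cone of a set $C$ in a vector space is $0^+C=\{u\;|\;x+\lambda u\in C\ \forall x\in C,\ \forall\lambda\geq0\}$. *)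

theory Defs
  imports "HOL-Analysis.Analysis"
begin

(* Dual space X^* = bounded linear functionals 'a =>L real; bidual = (('a =>L real) =>L real);
   extended reals = ereal. *)

definition canon :: "'a::real_normed_vector \<Rightarrow> (('a \<Rightarrow>\<^sub>L real) \<Rightarrow>\<^sub>L real)" where
  "canon x = Blinfun (\<lambda>f. blinfun_apply f x)"

definition dom_f :: "('b \<Rightarrow> ereal) \<Rightarrow> 'b set" where
  "dom_f f = {z. f z < \<infinity>}"

definition indicator_e :: "'b set \<Rightarrow> 'b \<Rightarrow> ereal" where
  "indicator_e C z = (if z \<in> C then 0 else \<infinity>)"

definition fconj ::
  "('a::real_normed_vector \<times> ('a \<Rightarrow>\<^sub>L real) \<Rightarrow> ereal)
   \<Rightarrow> ('a \<Rightarrow>\<^sub>L real) \<times> (('a \<Rightarrow>\<^sub>L real) \<Rightarrow>\<^sub>L real) \<Rightarrow> ereal" where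
  "fconj g = (\<lambda>(xs, xss). SUP p\<in>UNIV.
      ereal (blinfun_apply xs (fst p) + blinfun_apply xss (snd p)) - g p)"

definition Jop ::
  "('a::real_normed_vector \<times> ('a \<Rightarrow>\<^sub>L real) \<Rightarrow> ereal) \<Rightarrow> 'a \<times> ('a \<Rightarrow>\<^sub>L real) \<Rightarrow> ereal" where
  "Jop g = (\<lambda>(x, xs). fconj g (xs, canon x))"

definition recession_cone :: "'b::real_vector set \<Rightarrow> 'b set" where
  "recession_cone C = {u. \<forall>x\<in>C. \<forall>t::real. t \<ge> 0 \<longrightarrow> x + t *\<^sub>R u \<in> C}"

definition proper_fun :: "('b \<Rightarrow> ereal) \<Rightarrow> bool" where
  "proper_fun f \<longleftrightarrow> (\<forall>z. f z \<noteq> -\<infinity>) \<and> (\<exists>z. f z < \<infinity>)"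

definition convex_fun :: "('b::real_vector \<Rightarrow> ereal) \<Rightarrow> bool" where
  "convex_fun f \<longleftrightarrow> convex {(z, r::real). f z \<le> ereal r}"

definition lsc_fun :: "('b::topological_space \<Rightarrow> ereal) \<Rightarrow> bool" where
  "lsc_fun f \<longleftrightarrow> (\<forall>z. \<forall>r. r < f z \<longrightarrow> eventually (\<lambda>w. r < f w) (nhds z))"

end

theory Submission
  imports Defs
begin

text \<open>\<open>\<J>\<close> is the conjugate with respect to the symmetric pairing
  \<open>\<langle>(x,x\<^sup>*),(y,y\<^sup>*)\<rangle> = x\<^sup>*(y) + y\<^sup>*(x)\<close>, which is linear in the first argument. Hence
  \<open>\<J>h(z + t w) \<le> \<J>h(z) + t \<J>\<delta>\<^bsub>D(h)\<^esub>(w)\<close> for \<open>t \<ge> 0\<close>: on \<open>D(h)\<close> the extra term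
  \<open>t\<langle>w,p\<rangle>\<close> is bounded by \<open>t \<J>\<delta>\<^bsub>D(h)\<^esub>(w)\<close>, and off \<open>D(h)\<close> nothing is contributed.
  So both domains being finite gives \<open>z + t w \<in> D(\<J>h)\<close>.\<close>

definition pairing :: "'a::real_normed_vector \<times> ('a \<Rightarrow>\<^sub>L real) \<Rightarrow> 'a \<times> ('a \<Rightarrow>\<^sub>L real) \<Rightarrow> real" where
  "pairing w p = blinfun_apply (snd w) (fst p) + blinfun_apply (snd p) (fst w)"

lemma canon_apply: "blinfun_apply (canon x) f = blinfun_apply f x"
proof -
  have "bounded_linear (\<lambda>f. blinfun_apply f x)"
    by (rule bounded_linear_intro[where K="norm x"])
       (auto simp: blinfun.add_left blinfun.scaleR_left, metis mult.commute norm_blinfun)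
  thus ?thesis unfolding canon_def by (simp add: bounded_linear_Blinfun_apply)
qed

lemma Jop_eq_SUP_pairing: "Jop g w = (SUP p. ereal (pairing w p) - g p)"
  by (cases w) (simp add: Jop_def fconj_def pairing_def canon_apply)

lemma pairing_add_scaleR: "pairing (z + t *\<^sub>R w) p = pairing z p + t * pairing w p"
  by (simp add: pairing_def blinfun.add_left blinfun.scaleR_left blinfun.add_right
      blinfun.scaleR_right algebra_simps)

lemma Jop_indicator_e: "Jop (indicator_e C) w = (SUP p\<in>C. ereal (pairing w p))"
  unfolding Jop_eq_SUP_pairing
proof (rule antisym)
  show "(SUP p. ereal (pairing w p) - indicator_e C p) \<le> (SUP p\<in>C. ereal (pairing w p))"
    by (rule SUP_least) (auto simp: indicator_e_def intro: SUP_upper)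
  show "(SUP p\<in>C. ereal (pairing w p)) \<le> (SUP p. ereal (pairing w p) - indicator_e C p)"
    by (rule SUP_least) (auto simp: indicator_e_def intro: SUP_upper2)
qed

lemma Jop_add_scaleR_le:
  assumes no_minf: "\<And>p. g p \<noteq> -\<infinity>" and "t \<ge> 0"
  shows "Jop g (z + t *\<^sub>R w) \<le> Jop g z + ereal t * Jop (indicator_e (dom_f g)) w"
  unfolding Jop_eq_SUP_pairing[of g]
proof (rule SUP_least)
  fix p
  show "ereal (pairing (z + t *\<^sub>R w) p) - g p
      \<le> (SUP p. ereal (pairing z p) - g p) + ereal t * Jop (indicator_e (dom_f g)) w"
  proof (cases "g p = \<infinity>")
    case False
    with no_minf obtain r where r: "g p = ereal r" by (cases "g p") auto
    have "ereal (pairing (z + t *\<^sub>R w) p) - g p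
        = (ereal (pairing z p) - g p) + ereal t * ereal (pairing w p)"
      by (simp add: r pairing_add_scaleR)
    also have "\<dots> \<le> (SUP p. ereal (pairing z p) - g p) + ereal t * Jop (indicator_e (dom_f g)) w"
    proof (intro add_mono ereal_mult_left_mono)
      have "p \<in> dom_f g" using r by (simp add: dom_f_def)
      thus "ereal (pairing w p) \<le> Jop (indicator_e (dom_f g)) w"
        unfolding Jop_indicator_e by (rule SUP_upper)
    qed (use \<open>t \<ge> 0\<close> in \<open>auto intro: SUP_upper\<close>)
    finally show ?thesis .
  qed simp
qed

theorem proposition3p1:
  fixes h :: "'a::banach \<times> ('a \<Rightarrow>\<^sub>L real) \<Rightarrow> ereal"
  assumes "proper_fun h" and "lsc_fun h" and "convex_fun h"
  shows "dom_f (Jop (indicator_e (dom_f h))) \<subseteq> recession_cone (dom_f (Jop h))"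
  unfolding recession_cone_def
proof (intro subsetI CollectI ballI allI impI)
  fix w z and t :: real
  assume w: "w \<in> dom_f (Jop (indicator_e (dom_f h)))" and z: "z \<in> dom_f (Jop h)" and "t \<ge> 0"
  have no_minf: "\<And>p. h p \<noteq> -\<infinity>" using \<open>proper_fun h\<close> unfolding proper_fun_def by blast
  have "ereal t * Jop (indicator_e (dom_f h)) w < \<infinity>"
    using w \<open>t \<ge> 0\<close> by (cases "Jop (indicator_e (dom_f h)) w") (auto simp: dom_f_def)
  with z have "Jop h z + ereal t * Jop (indicator_e (dom_f h)) w < \<infinity>"
    by (simp add: dom_f_def)
  moreover have "Jop h (z + t *\<^sub>R w) \<le> Jop h z + ereal t * Jop (indicator_e (dom_f h)) w"
    using no_minf \<open>t \<ge> 0\<close> by (rule Jop_add_scaleR_le)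
  ultimately show "z + t *\<^sub>R w \<in> dom_f (Jop h)"
    unfolding dom_f_def using le_less_trans by blast
qed

end
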